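(* Let $K$ be a triangle and $p\ge1$. The space $\mathcal P_p(K;\mathbb S)$ is unisolvent with respect to the following degrees of freedom for $\sigma\in\mathcal P_p(K;\mathbb S)$: (i) for each vertex $\mathbf x$ of $K$, the 3 values $\sigma(\mathbf x)$ (the entries of the symmetric matrix); (ii) for each edge $\gamma$ of $K$, the $2(p-1)$ values $\int_\gamma(\sigma\mathbf n)\cdot r\,\mathrm ds$ for $r\in\mathcal P_{p-2}(\gamma;\mathbb V)$; (iii) the $\tfrac32p(p-1)$ values $\int_K\sigma:\tau\,\mathrm dx$ for $\tau\in\Sigma^p_0(K;\mathbb S)$. That is, a $\sigma\in\mathcal P_p(K;\mathbb S)$ on which all these functionals vanish is zero.
   Context: $\mathbb V=\mathbb R^2$ and $\mathbb S=\mathbb R^{2\times2}_{\rm sym}$; $\mathbf n$ is the outward unit normal of $K$, and $A:B=\sum_{ij}A_{ij}B_{ij}$. We set $\Sigma^p_0(K;\mathbb S)=\{\tau\in\mathcal P_p(K;\mathbb S):\tau\mathbf n|_{\partial K}=0\}$, and by convention $\mathcal P_{-1}=\{0\}$. *)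

theory Defs
  imports "HOL-Analysis.Analysis"
begin

definition polyP :: "nat \<Rightarrow> (real^2 \<Rightarrow> real) \<Rightarrow> bool" where
  "polyP d f \<longleftrightarrow> (\<exists>c :: nat \<Rightarrow> nat \<Rightarrow> real.
     \<forall>x. f x = (\<Sum>i\<le>d. \<Sum>j\<le>d - i. c i j * (x $ 1) ^ i * (x $ 2) ^ j))"

definition symPolyP :: "nat \<Rightarrow> (real^2 \<Rightarrow> real^2^2) \<Rightarrow> bool" where
  "symPolyP p \<sigma> \<longleftrightarrow> (\<forall>x. transpose (\<sigma> x) = \<sigma> x) \<and>
     (\<forall>i j. polyP p (\<lambda>x. \<sigma> x $ i $ j))"

text \<open>Univariate polynomials of degree at most d (an integer); for d < 0 only the zero
  polynomial (convention P_{-1} = {0}).\<close>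
definition upolyP :: "int \<Rightarrow> (real \<Rightarrow> real) \<Rightarrow> bool" where
  "upolyP d g \<longleftrightarrow> (if d < 0 then g = (\<lambda>_. 0)
      else (\<exists>c :: nat \<Rightarrow> real. \<forall>t. g t = (\<Sum>k\<le>nat d. c k * t ^ k)))"

text \<open>P_d(gamma;V) for an edge, parametrised affinely by t in [0,1].\<close>
definition vpolyP :: "int \<Rightarrow> (real \<Rightarrow> real^2) \<Rightarrow> bool" where
  "vpolyP d r \<longleftrightarrow> (\<forall>i. upolyP d (\<lambda>t. r t $ i))"

definition frob :: "real^2^2 \<Rightarrow> real^2^2 \<Rightarrow> real" where
  "frob A B = (\<Sum>i\<in>UNIV. \<Sum>j\<in>UNIV. A $ i $ j * B $ i $ j)"

definition edge_normal :: "real^2 \<Rightarrow> real^2 \<Rightarrow> real^2 \<Rightarrow> real^2" where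
  "edge_normal u v w =
     (let t = (1 / norm (v - u)) *\<^sub>R (\<chi> i. if i = 1 then - ((v - u) $ 2) else (v - u) $ 1)
      in if t \<bullet> (w - u) < 0 then t else - t)"

text \<open>The line integral over the edge [u,v]:  int_gamma (sigma n) . r ds, with the edge
  parametrised by x = u + t (v - u), t in [0,1], so ds = |v - u| dt.\<close>
definition edge_moment :: "(real^2 \<Rightarrow> real^2^2) \<Rightarrow> real^2 \<Rightarrow> real^2 \<Rightarrow> real^2
     \<Rightarrow> (real \<Rightarrow> real^2) \<Rightarrow> real" where
  "edge_moment \<sigma> u v w r =
     integral {0..1} (\<lambda>t. ((\<sigma> (u + t *\<^sub>R (v - u)) *v edge_normal u v w) \<bullet> r t) * norm (v - u))"

definition Sigma0 :: "nat \<Rightarrow> real^2 \<Rightarrow> real^2 \<Rightarrow> real^2 \<Rightarrow> (real^2 \<Rightarrow> real^2^2) \<Rightarrow> bool" where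
  "Sigma0 p a b c \<tau> \<longleftrightarrow> symPolyP p \<tau> \<and>
     (\<forall>x\<in>closed_segment a b. \<tau> x *v edge_normal a b c = 0) \<and>
     (\<forall>x\<in>closed_segment b c. \<tau> x *v edge_normal b c a = 0) \<and>
     (\<forall>x\<in>closed_segment c a. \<tau> x *v edge_normal c a b = 0)"

end

theory Submission
  imports Defs "HOL-Computational_Algebra.Polynomial"
begin

text \<open>On an edge, the normal traction \<sigma>n is a vector polynomial of degree at most p in the
  edge parameter t that vanishes at both end points, hence equals t(1 - t) q(t) with q of
  degree at most p - 2. Testing the edge moments with r = q gives the integral of the
  nonnegative t(1 - t) |q(t)|^2, so q = 0 and \<sigma>n vanishes on the boundary. Then \<sigma> itself is an
  admissible test function for the interior moments, which gives the integral of |\<sigma>|^2 over K;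
  so \<sigma> vanishes on the interior of K and, being polynomial, everywhere.\<close>

lemma polyP_add:
  assumes "polyP d f" and "polyP d g"
  shows "polyP d (\<lambda>x. f x + g x)"
proof -
  obtain c where "\<And>x. f x = (\<Sum>i\<le>d. \<Sum>j\<le>d - i. c i j * (x $ 1) ^ i * (x $ 2) ^ j)"
    using assms(1) unfolding polyP_def by blast
  moreover obtain c' where "\<And>x. g x = (\<Sum>i\<le>d. \<Sum>j\<le>d - i. c' i j * (x $ 1) ^ i * (x $ 2) ^ j)"
    using assms(2) unfolding polyP_def by blast
  ultimately show ?thesis
    unfolding polyP_def
    by (intro exI[of _ "\<lambda>i j. c i j + c' i j"]) (simp add: distrib_right sum.distrib)
qed

lemma polyP_const_mult:
  assumes "polyP d f"
  shows "polyP d (\<lambda>x. a * f x)"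
proof -
  obtain c where "\<And>x. f x = (\<Sum>i\<le>d. \<Sum>j\<le>d - i. c i j * (x $ 1) ^ i * (x $ 2) ^ j)"
    using assms unfolding polyP_def by blast
  then show ?thesis
    unfolding polyP_def
    by (intro exI[of _ "\<lambda>i j. a * c i j"]) (simp add: sum_distrib_left mult.assoc)
qed

lemma degree_linear_power_le:
  fixes a b :: "'a::comm_semiring_1"
  shows "degree ([:a, b:] ^ n) \<le> n"
proof -
  have "degree [:a, b:] * n \<le> 1 * n"
    by (intro mult_le_mono1) (auto simp: degree_pCons_le)
  then show ?thesis
    using degree_power_le[of "[:a, b:]" n] by linarith
qed

lemma polyP_along_line:
  assumes "polyP d f"
  obtains P where "degree P \<le> d" and "\<And>t. f (u + t *\<^sub>R w) = poly P t"
proof -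
  obtain c where c: "\<And>x. f x = (\<Sum>i\<le>d. \<Sum>j\<le>d - i. c i j * (x $ 1) ^ i * (x $ 2) ^ j)"
    using assms unfolding polyP_def by blast
  define P where "P = (\<Sum>i\<le>d. \<Sum>j\<le>d - i. [:c i j:] * [:u$1, w$1:] ^ i * [:u$2, w$2:] ^ j)"
  have "degree ([:c i j:] * [:u$1, w$1:] ^ i * [:u$2, w$2:] ^ j) \<le> d" if "i + j \<le> d" for i j
  proof -
    have "degree ([:u$1, w$1:] ^ i * [:u$2, w$2:] ^ j) \<le> i + j"
      by (rule order_trans[OF degree_mult_le add_mono[OF degree_linear_power_le degree_linear_power_le]])
    then show ?thesis
      using that by (simp add: mult.assoc)
  qed
  then have "degree P \<le> d"
    unfolding P_def by (intro degree_sum_le) auto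
  moreover have "f (u + t *\<^sub>R w) = poly P t" for t
    by (simp add: c P_def poly_sum mult.assoc)
  ultimately show ?thesis by (rule that)
qed

lemma poly_vanishing_at_0_1_factor:
  fixes P :: "real poly"
  assumes "poly P 0 = 0" and "poly P 1 = 0"
  obtains Q where "\<And>t. poly P t = t * (1 - t) * poly Q t" and "Q = 0 \<or> degree Q + 2 = degree P"
proof -
  obtain P1 where P1: "P = [:0, 1:] * P1"
    using assms(1) poly_eq_0_iff_dvd[of P 0] by (auto elim: dvdE)
  then have "poly P1 1 = 0" using assms(2) by simp
  then obtain Q where Q: "P1 = [:-1, 1:] * Q"
    using poly_eq_0_iff_dvd[of P1 1] by (auto elim: dvdE)
  have "poly P t = t * (1 - t) * poly (-Q) t" for t
    by (simp add: P1 Q algebra_simps)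
  moreover have "-Q = 0 \<or> degree (-Q) + 2 = degree P"
    by (cases "Q = 0") (simp_all add: P1 Q degree_mult_eq del: mult_pCons_left)
  ultimately show ?thesis by (rule that)
qed

lemma upolyP_poly:
  assumes "Q = 0 \<or> int (degree Q) \<le> d"
  shows "upolyP d (poly Q)"
proof (cases "Q = 0")
  case True
  then show ?thesis by (auto simp: upolyP_def intro: exI[of _ "\<lambda>_. 0"])
next
  case False
  with assms have deg: "degree Q \<le> nat d" and "d \<ge> 0" by auto
  moreover have "poly Q t = (\<Sum>k\<le>nat d. coeff Q k * t ^ k)" for t
    unfolding poly_altdef
    by (rule sum.mono_neutral_left) (use deg in \<open>auto simp: coeff_eq_0\<close>)
  ultimately show ?thesis unfolding upolyP_def by auto
qed

lemma poly_vector_orthogonal_to_lower_degree_eq_0: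
  fixes P :: "2 \<Rightarrow> real poly"
  assumes deg: "\<And>i. degree (P i) \<le> p"
    and ends: "\<And>i. poly (P i) 0 = 0" "\<And>i. poly (P i) 1 = 0"
    and orth: "\<And>r. vpolyP (int p - 2) r \<Longrightarrow>
                 integral {0..1} (\<lambda>t. (\<chi> i. poly (P i) t) \<bullet> r t) = 0"
  shows "P i = 0"
proof -
  have "\<exists>Q. (\<forall>t. poly (P i) t = t * (1 - t) * poly Q t) \<and> (Q = 0 \<or> degree Q + 2 = degree (P i))" for i
    by (rule poly_vanishing_at_0_1_factor[OF ends(1)[of i] ends(2)[of i]]) auto
  then obtain Q where Q: "\<And>i t. poly (P i) t = t * (1 - t) * poly (Q i) t"
    and degQ: "\<And>i. Q i = 0 \<or> degree (Q i) + 2 = degree (P i)"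
    by metis
  define q where "q t = (\<chi> i. poly (Q i) t)" for t
  define g where "g t = t * (1 - t) * norm (q t) ^ 2" for t
  have "Q i = 0 \<or> int (degree (Q i)) \<le> int p - 2" for i
    using deg[of i] degQ[of i] by auto
  then have "vpolyP (int p - 2) q"
    unfolding vpolyP_def q_def by (auto intro: upolyP_poly)
  moreover have "(\<lambda>t. (\<chi> i. poly (P i) t) \<bullet> q t) = g"
  proof
    fix t
    have "(\<chi> i. poly (P i) t) = (t * (1 - t)) *\<^sub>R q t"
      by (simp add: vec_eq_iff Q q_def)
    then show "(\<chi> i. poly (P i) t) \<bullet> q t = g t"
      by (simp add: g_def power2_norm_eq_inner)
  qed
  ultimately have "integral {0..1} g = 0"
    using orth by metis
  moreover have "continuous_on {0..1} g"
    unfolding g_def q_def by (intro continuous_intros)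
  moreover have "g t \<ge> 0" if "t \<in> {0..1}" for t
    using that unfolding g_def by (intro mult_nonneg_nonneg) auto
  ultimately have g0: "g t = 0" if "t \<in> {0..1}" for t
    using integral_eq_0_iff[of 0 1 g] that by simp
  have "poly (Q i) t = 0" if "t \<in> {0<..<1}" for t
    using g0[of t] that by (auto simp: g_def q_def vec_eq_iff)
  then have "{0<..<1} \<subseteq> {t. poly (Q i) t = 0}"
    by blast
  then have "Q i = 0"
    using poly_roots_finite infinite_Ioo[OF zero_less_one] finite_subset by blast
  then have "poly (P i) = poly 0"
    by (simp add: Q fun_eq_iff)
  then show "P i = 0"
    by (simp add: poly_eq_poly_eq_iff)
qed

lemma edge_traction_vanishes:
  fixes \<sigma> :: "real^2 \<Rightarrow> real^2^2"
  assumes "u \<noteq> v" and entries: "\<And>i j. polyP p (\<lambda>x. \<sigma> x $ i $ j)"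
    and "\<sigma> u = 0" and "\<sigma> v = 0"
    and moments: "\<And>r. vpolyP (int p - 2) r \<Longrightarrow> edge_moment \<sigma> u v w r = 0"
  shows "\<forall>x\<in>closed_segment u v. \<sigma> x *v edge_normal u v w = 0"
proof -
  define n where "n = edge_normal u v w"
  define \<gamma> where "\<gamma> t = u + t *\<^sub>R (v - u)" for t
  have traction_poly: "polyP p (\<lambda>x. (\<sigma> x *v n) $ i)" for i
  proof -
    have "polyP p (\<lambda>x. n $ 1 * \<sigma> x $ i $ 1 + n $ 2 * \<sigma> x $ i $ 2)"
      by (intro polyP_add polyP_const_mult entries)
    then show ?thesis
      by (simp add: matrix_vector_mult_def sum_2 mult.commute)
  qed
  have "\<exists>P. degree P \<le> p \<and> (\<forall>t. (\<sigma> (\<gamma> t) *v n) $ i = poly P t)" for i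
    using polyP_along_line[OF traction_poly[of i], of u "v - u"] unfolding \<gamma>_def by blast
  then obtain P where deg: "\<And>i. degree (P i) \<le> p"
    and P: "\<And>i t. (\<sigma> (\<gamma> t) *v n) $ i = poly (P i) t"
    by metis
  have traction: "\<sigma> (\<gamma> t) *v n = (\<chi> i. poly (P i) t)" for t
    by (simp add: vec_eq_iff P)
  have "P i = 0" for i
  proof (rule poly_vector_orthogonal_to_lower_degree_eq_0[OF deg])
    show "poly (P i) 0 = 0" "poly (P i) 1 = 0" for i
      using P[where t = 0] P[where t = 1] \<open>\<sigma> u = 0\<close> \<open>\<sigma> v = 0\<close> by (simp_all add: \<gamma>_def)
  next
    fix r assume "vpolyP (int p - 2) r"
    then have "integral {0..1} (\<lambda>t. ((\<sigma> (\<gamma> t) *v n) \<bullet> r t) * norm (v - u)) = 0"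
      using moments unfolding edge_moment_def n_def \<gamma>_def by simp
    then show "integral {0..1} (\<lambda>t. (\<chi> i. poly (P i) t) \<bullet> r t) = 0"
      using \<open>u \<noteq> v\<close> by (simp add: traction)
  qed
  then have "\<sigma> (\<gamma> t) *v n = 0" for t
    by (simp add: traction vec_eq_iff)
  moreover have "closed_segment u v = \<gamma> ` {0..1}"
    unfolding closed_segment_image_interval \<gamma>_def by (simp add: algebra_simps)
  ultimately show ?thesis
    unfolding n_def by auto
qed

lemma polyP_continuous_on:
  assumes "polyP d f"
  shows "continuous_on S f"
proof -
  obtain c where "\<And>x. f x = (\<Sum>i\<le>d. \<Sum>j\<le>d - i. c i j * (x $ 1) ^ i * (x $ 2) ^ j)"
    using assms unfolding polyP_def by blast
  then have f_eq: "f = (\<lambda>x. \<Sum>i\<le>d. \<Sum>j\<le>d - i. c i j * (x $ 1) ^ i * (x $ 2) ^ j)"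
    by blast
  show ?thesis
    unfolding f_eq by (intro continuous_intros)
qed

lemma polyP_vanishing_on_open_eq_0:
  assumes "polyP d f" and "open U" and "x0 \<in> U" and "\<And>y. y \<in> U \<Longrightarrow> f y = 0"
  shows "f x = 0"
proof -
  obtain e where "e > 0" and e: "ball x0 e \<subseteq> U"
    using \<open>open U\<close> \<open>x0 \<in> U\<close> open_contains_ball by blast
  obtain P where P: "\<And>t. f (x0 + t *\<^sub>R (x - x0)) = poly P t"
    using polyP_along_line[OF \<open>polyP d f\<close>] by metis
  define N where "N = norm (x - x0)"
  define \<delta> where "\<delta> = e / (N + 1)"
  have "N + 1 > 0"
    by (simp add: N_def add_nonneg_pos)
  then have "\<delta> > 0"
    using \<open>e > 0\<close> by (simp add: \<delta>_def)
  have "poly P t = 0" if t: "t \<in> {0<..<\<delta>}" for t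
  proof -
    have "t * N \<le> \<delta> * N"
      using t by (simp add: N_def mult_right_mono)
    also have "\<dots> < \<delta> * (N + 1)"
      using \<open>\<delta> > 0\<close> by simp
    also have "\<dots> = e"
      using \<open>N + 1 > 0\<close> by (simp add: \<delta>_def)
    finally have "x0 + t *\<^sub>R (x - x0) \<in> ball x0 e"
      using t by (simp add: dist_norm N_def)
    then show ?thesis
      using e P assms(4) by (metis subsetD)
  qed
  then have "{0<..<\<delta>} \<subseteq> {t. poly P t = 0}"
    by blast
  then have "P = 0"
    using poly_roots_finite infinite_Ioo[OF \<open>\<delta> > 0\<close>] finite_subset by blast
  then show "f x = 0"
    using P[of 1] by simp
qed

lemma integrable_continuous_compact:
  fixes f :: "'a::euclidean_space \<Rightarrow> real"
  assumes "compact S" and "continuous_on S f"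
  shows "f integrable_on S"
proof -
  have "(\<lambda>x. indicator S x *\<^sub>R f x) integrable_on UNIV"
    by (rule integrable_on_lborel[OF borel_integrable_compact[OF assms]])
  moreover have "(\<lambda>x. indicator S x *\<^sub>R f x) = (\<lambda>x. if x \<in> S then f x else 0)"
    by (auto simp: indicator_def fun_eq_iff)
  ultimately show ?thesis
    by (simp add: integrable_restrict_UNIV)
qed

lemma nonneg_integral_eq_0_imp_zero_on_interior:
  fixes f :: "'a::euclidean_space \<Rightarrow> real"
  assumes "f integrable_on S" and cont: "continuous_on S f" and nonneg: "\<And>x. x \<in> S \<Longrightarrow> f x \<ge> 0"
    and "integral S f = 0" and "x \<in> interior S"
  shows "f x = 0"
proof -
  obtain lo hi where box: "cbox lo hi \<subseteq> interior S" "x \<in> box lo hi"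
    using open_contains_cbox[OF open_interior \<open>x \<in> interior S\<close>] by metis
  then have sub: "cbox lo hi \<subseteq> S"
    using interior_subset by blast
  have cont_box: "continuous_on (cbox lo hi) f"
    using continuous_on_subset[OF cont sub] .
  have "integral (cbox lo hi) f \<le> integral S f"
    using sub nonneg
    by (intro integral_subset_le[OF sub integrable_continuous[OF cont_box] \<open>f integrable_on S\<close>]) auto
  moreover have "integral (cbox lo hi) f \<ge> 0"
    using sub nonneg by (intro integral_nonneg[OF integrable_continuous[OF cont_box]]) auto
  ultimately have "integral (cbox lo hi) f = 0"
    using \<open>integral S f = 0\<close> by simp
  then show ?thesis
    using integral_cbox_eq_0_iff[OF cont_box] box sub nonneg box_subset_cbox by blast
qed

lemma frob_self_nonneg: "frob A A \<ge> 0"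
  by (simp add: frob_def sum_nonneg)

lemma frob_self_eq_0_iff: "frob A A = 0 \<longleftrightarrow> A = 0"
  by (simp add: frob_def sum_nonneg sum_nonneg_eq_0_iff vec_eq_iff)

lemma interior_triangle_nonempty:
  fixes a b c :: "real^2"
  assumes "\<not> collinear {a, b, c}"
  shows "interior (convex hull {a, b, c}) \<noteq> {}"
proof -
  have "a \<noteq> b" "a \<noteq> c" "b \<noteq> c" and indep: "\<not> affine_dependent {a, b, c}"
    using assms by (auto simp: collinear_3_eq_affine_dependent)
  then have "card {a, b, c} = Suc DIM(real^2)"
    by simp
  then show ?thesis
    using interior_convex_hull_eq_empty indep by blast
qed

lemma polyP_matrix_eq_0_if_integral_frob_self_eq_0:
  fixes a b c :: "real^2" and \<sigma> :: "real^2 \<Rightarrow> real^2^2"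
  assumes "\<not> collinear {a, b, c}" and entries: "\<And>i j. polyP p (\<lambda>x. \<sigma> x $ i $ j)"
    and "integral (convex hull {a, b, c}) (\<lambda>x. frob (\<sigma> x) (\<sigma> x)) = 0"
  shows "\<sigma> = (\<lambda>x. 0)"
proof -
  define K where "K = convex hull {a, b, c}"
  define h where "h = (\<lambda>x. frob (\<sigma> x) (\<sigma> x))"
  have h_cont: "continuous_on K h"
    unfolding h_def frob_def by (intro continuous_intros polyP_continuous_on[OF entries])
  have h_nonneg: "\<And>x. x \<in> K \<Longrightarrow> h x \<ge> 0"
    by (simp add: h_def frob_self_nonneg)
  have h_int: "h integrable_on K"
    using integrable_continuous_compact[OF _ h_cont] by (simp add: K_def compact_convex_hull)
  have h_int_0: "integral K h = 0"
    using assms(3) by (simp add: K_def h_def)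
  have "h x = 0" if "x \<in> interior K" for x
    using h_int h_cont h_nonneg h_int_0 that by (rule nonneg_integral_eq_0_imp_zero_on_interior)
  then have zero_inside: "\<sigma> x $ i $ j = 0" if "x \<in> interior K" for x i j
    using that by (simp add: h_def frob_self_eq_0_iff)
  obtain x0 where "x0 \<in> interior K"
    using interior_triangle_nonempty[OF assms(1)] unfolding K_def by blast
  then have "\<sigma> x $ i $ j = 0" for x i j
    by (rule polyP_vanishing_on_open_eq_0[OF entries open_interior]) (rule zero_inside)
  then show ?thesis
    by (simp add: fun_eq_iff vec_eq_iff)
qed

theorem lemma3p2:
  fixes a b c :: "real^2" and p :: nat and \<sigma> :: "real^2 \<Rightarrow> real^2^2"
  assumes tri: "\<not> collinear {a, b, c}"
    and p1: "p \<ge> 1"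
    and sig: "symPolyP p \<sigma>"
    and vert: "\<sigma> a = 0" "\<sigma> b = 0" "\<sigma> c = 0"
    and edges: "\<And>r. vpolyP (int p - 2) r \<Longrightarrow> edge_moment \<sigma> a b c r = 0"
               "\<And>r. vpolyP (int p - 2) r \<Longrightarrow> edge_moment \<sigma> b c a r = 0"
               "\<And>r. vpolyP (int p - 2) r \<Longrightarrow> edge_moment \<sigma> c a b r = 0"
    and interior: "\<And>\<tau>. Sigma0 p a b c \<tau> \<Longrightarrow>
                      integral (convex hull {a, b, c}) (\<lambda>x. frob (\<sigma> x) (\<tau> x)) = 0"
  shows "\<sigma> = (\<lambda>x. 0)"
proof -
  have entries: "\<And>i j. polyP p (\<lambda>x. \<sigma> x $ i $ j)"
    using sig by (simp add: symPolyP_def)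
  have "a \<noteq> b" "b \<noteq> c" "c \<noteq> a"
    using tri by (auto simp: collinear_3_eq_affine_dependent)
  then have "Sigma0 p a b c \<sigma>"
    unfolding Sigma0_def
    using sig edge_traction_vanishes[OF \<open>a \<noteq> b\<close> entries vert(1,2) edges(1)]
      edge_traction_vanishes[OF \<open>b \<noteq> c\<close> entries vert(2,3) edges(2)]
      edge_traction_vanishes[OF \<open>c \<noteq> a\<close> entries vert(3,1) edges(3)]
    by blast
  then have "integral (convex hull {a, b, c}) (\<lambda>x. frob (\<sigma> x) (\<sigma> x)) = 0"
    by (rule interior)
  then show ?thesis
    by (rule polyP_matrix_eq_0_if_integral_frob_self_eq_0[OF tri entries])
qed

end
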